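(* Suppose the pair $(A,B)$ satisfies the Kalman condition (K) with integer $d_*$, and that $F$ is smooth and globally Lipschitz. Suppose there is a sequence $(y^{(n)})_{n\in\mathbb{N}}$ in $\mathbb{R}^d$ bounded away from $0$ such that $$\lim_{n\to\infty}|y^{(n)}|^{k-1}\,\|D^kF(y^{(n)})\|=0\quad\text{for each }k=1,2,\dots,d_*-1.$$ Then there exists a point $x_0\in\mathbb{R}^d$ at which the weak Hörmander condition (H) holds.
   Context: $A:\mathbb{R}^d\to\mathbb{R}^d$, $B:\mathbb{R}^n\to\mathbb{R}^d$ linear, $n\le d$, $F:\mathbb{R}^d\to\mathbb{R}^d$; $D^kF(y)$ is the $k$th Fréchet derivative at $y$ (a $k$-linear map) with its operator norm. $e_1,\dots,e_n$ is the standard basis of $\mathbb{R}^n$. (K) the columns of $B, AB, A^2B,\dots$ span $\mathbb{R}^d$; $d_*$ denotes the smallest positive integer such that $\operatorname{span}\{A^jBe_i: 0\le j\le d_*-1,\ 1\le i\le n\}=\mathbb{R}^d$. (H) at $x_0$: the vector fields $V_0$, $\mathcal{L}_{V_2}V_1$, $\mathcal{L}_{V_3}\mathcal{L}_{V_2}V_1,\dots$ with $V_0\in\mathcal{B}$ and $V_1,V_2,\dots\in\mathcal{B}\cup\{A+F\}$ span $\mathbb{R}^d$ at $x_0$, where $\mathcal{B}=\{Be_1,\dots,Be_n\}$ (constant vector fields), $A+F$ is the vector field $x\mapsto Ax+F(x)$, and $\mathcal{L}_GH=DH[G]-DG[H]$. *)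

theory Defs
  imports "HOL-Analysis.Analysis"
begin

text \<open>k-th Frechet derivative of F at y, as a k-linear map acting on a list of
  k direction vectors: D^0 F y [] = F y, D^(k+1) F y (v # vs) = D(z. D^k F z vs)(y)[v].\<close>
fun kderiv :: "('a::real_normed_vector \<Rightarrow> 'b::real_normed_vector) \<Rightarrow> nat \<Rightarrow> 'a \<Rightarrow> 'a list \<Rightarrow> 'b" where
  "kderiv F 0 y vs = F y"
| "kderiv F (Suc k) y vs = frechet_derivative (\<lambda>z. kderiv F k z (tl vs)) (at y) (hd vs)"

definition kderiv_norm :: "('a::real_normed_vector \<Rightarrow> 'b::real_normed_vector) \<Rightarrow> nat \<Rightarrow> 'a \<Rightarrow> real" where
  "kderiv_norm F k y = Sup {norm (kderiv F k y vs) | vs. length vs = k \<and> (\<forall>v\<in>set vs. norm v \<le> 1)}"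

definition smooth :: "('a::real_normed_vector \<Rightarrow> 'b::real_normed_vector) \<Rightarrow> bool" where
  "smooth F \<longleftrightarrow> (\<forall>k vs y. length vs = k \<longrightarrow> (\<lambda>z. kderiv F k z vs) differentiable (at y))"

definition lie :: "('a::real_normed_vector \<Rightarrow> 'a) \<Rightarrow> ('a \<Rightarrow> 'a) \<Rightarrow> ('a \<Rightarrow> 'a)" where
  "lie G H = (\<lambda>x. frechet_derivative H (at x) (G x) - frechet_derivative G (at x) (H x))"

definition Bfields :: "('b::euclidean_space \<Rightarrow> 'a::euclidean_space) \<Rightarrow> ('a \<Rightarrow> 'a) set" where
  "Bfields B = {(\<lambda>x. B e) | e. e \<in> Basis}"

text \<open>Brackets L_{V_k} ... L_{V_2} V_1 with k >= 2 and V_i in S.\<close>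
inductive_set brackets :: "('a::real_normed_vector \<Rightarrow> 'a) set \<Rightarrow> ('a \<Rightarrow> 'a) set" for S where
  base: "V1 \<in> S \<Longrightarrow> V2 \<in> S \<Longrightarrow> lie V2 V1 \<in> brackets S"
| step: "W \<in> brackets S \<Longrightarrow> V \<in> S \<Longrightarrow> lie V W \<in> brackets S"

definition hoermander :: "('a::euclidean_space \<Rightarrow> 'a) \<Rightarrow> ('b::euclidean_space \<Rightarrow> 'a) \<Rightarrow> ('a \<Rightarrow> 'a) \<Rightarrow> 'a \<Rightarrow> bool" where
  "hoermander A B F x0 \<longleftrightarrow>
     span ((\<lambda>V. V x0) ` (Bfields B \<union> brackets (Bfields B \<union> {(\<lambda>x. A x + F x)}))) = UNIV"

definition kalman :: "('a::euclidean_space \<Rightarrow> 'a) \<Rightarrow> ('b::euclidean_space \<Rightarrow> 'a) \<Rightarrow> bool" where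
  "kalman A B \<longleftrightarrow> span {(A ^^ j) (B e) | j e. e \<in> Basis} = UNIV"

definition dstar :: "('a::euclidean_space \<Rightarrow> 'a) \<Rightarrow> ('b::euclidean_space \<Rightarrow> 'a) \<Rightarrow> nat" where
  "dstar A B = (LEAST m. 0 < m \<and> span {(A ^^ j) (B e) | j e. j < m \<and> e \<in> Basis} = UNIV)"

end

theory Submission
  imports Defs
begin

text \<open>Write \<open>V = A + F\<close>. By induction on \<open>j\<close>, the iterated bracket
  \<open>(ad V)\<^sup>j (B e)\<close> is \<open>(-A)\<^sup>j B e\<close> plus a remainder whose components are
  polynomials in the components of \<open>V\<close> and of \<open>D\<^sup>kF\<close>, \<open>1 \<le> k \<le> j\<close>. Give \<open>V\<close>
  weight 1 and \<open>D\<^sup>kF\<close> weight \<open>1 - k\<close>: every monomial of the remainder has weight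
  at most 0 and contains a factor \<open>D\<^sup>kF\<close>. As \<open>V\<close> grows at most linearly and
  \<open>\<bar>y\<bar>\<^sup>k\<^sup>-\<^sup>1 \<parallel>D\<^sup>kF(y)\<parallel>\<close> tends to 0 along \<open>y\<^sub>n\<close> for \<open>k < d\<^sub>*\<close>, the remainder
  vanishes along \<open>y\<^sub>n\<close> whenever \<open>j < d\<^sub>*\<close>. Hence these brackets, evaluated at
  \<open>y\<^sub>n\<close>, converge to the vectors \<open>(-A)\<^sup>j B e\<close>, \<open>j < d\<^sub>*\<close>, which span by (K);
  spanning being an open condition, (H) holds at \<open>y\<^sub>n\<close> for some \<open>n\<close>.\<close>

fun multilinear :: "nat \<Rightarrow> ('a::real_normed_vector list \<Rightarrow> 'b::real_normed_vector) \<Rightarrow> bool" where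
  "multilinear 0 g = True"
| "multilinear (Suc k) g \<longleftrightarrow>
     (\<forall>vs. length vs = k \<longrightarrow> linear (\<lambda>v. g (v # vs))) \<and> (\<forall>v. multilinear k (\<lambda>vs. g (v # vs)))"

lemma frechet_derivative_add:
  assumes "f differentiable (at x)" "g differentiable (at x)"
  shows "frechet_derivative (\<lambda>z. f z + g z) (at x) =
    (\<lambda>h. frechet_derivative f (at x) h + frechet_derivative g (at x) h)"
  using assms
  by (intro frechet_derivative_at[symmetric] has_derivative_add) (auto simp: frechet_derivative_works)

lemma frechet_derivative_scaleR:
  assumes "f differentiable (at x)"
  shows "frechet_derivative (\<lambda>z. c *\<^sub>R f z) (at x) = (\<lambda>h. c *\<^sub>R frechet_derivative f (at x) h)"
  using assms
  by (intro frechet_derivative_at[symmetric] has_derivative_scaleR_right)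
     (auto simp: frechet_derivative_works)

lemma linear_frechet_derivative_parametric:
  assumes "\<And>z. linear (G z)" "\<And>w. (\<lambda>z. G z w) differentiable (at x)"
  shows "linear (\<lambda>w. frechet_derivative (\<lambda>z. G z w) (at x) v)"
proof (rule linearI)
  fix w1 w2
  have "(\<lambda>z. G z (w1 + w2)) = (\<lambda>z. G z w1 + G z w2)"
    using assms(1) by (simp add: linear_add)
  then show "frechet_derivative (\<lambda>z. G z (w1 + w2)) (at x) v =
      frechet_derivative (\<lambda>z. G z w1) (at x) v + frechet_derivative (\<lambda>z. G z w2) (at x) v"
    using assms(2) by (simp add: frechet_derivative_add)
next
  fix c w
  have "(\<lambda>z. G z (c *\<^sub>R w)) = (\<lambda>z. c *\<^sub>R G z w)"
    using assms(1) by (simp add: linear_scale)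
  then show "frechet_derivative (\<lambda>z. G z (c *\<^sub>R w)) (at x) v =
      c *\<^sub>R frechet_derivative (\<lambda>z. G z w) (at x) v"
    using assms(2) by (simp add: frechet_derivative_scaleR)
qed

lemma multilinear_frechet_derivative:
  assumes "\<And>z. multilinear k (G z)"
    and "\<And>vs. length vs = k \<Longrightarrow> (\<lambda>z. G z vs) differentiable (at x)"
  shows "multilinear k (\<lambda>vs. frechet_derivative (\<lambda>z. G z vs) (at x) v)"
  using assms
proof (induction k arbitrary: G)
  case 0
  then show ?case by simp
next
  case (Suc k)
  have "linear (\<lambda>w. frechet_derivative (\<lambda>z. G z (w # vs)) (at x) v)" if "length vs = k" for vs
    using Suc.prems that by (intro linear_frechet_derivative_parametric) auto
  moreover have "multilinear k (\<lambda>vs. frechet_derivative (\<lambda>z. G z (w # vs)) (at x) v)" for w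
    using Suc.prems by (intro Suc.IH) auto
  ultimately show ?case by simp
qed

lemma kderiv_differentiable:
  assumes "smooth F" "length vs = k"
  shows "(\<lambda>z. kderiv F k z vs) differentiable (at x)"
  using assms unfolding smooth_def by blast

lemma multilinear_kderiv:
  assumes "smooth F"
  shows "multilinear k (kderiv F k x)"
proof (induction k arbitrary: x)
  case 0
  then show ?case by simp
next
  case (Suc k)
  have "linear (\<lambda>v. kderiv F (Suc k) x (v # vs))" if "length vs = k" for vs
    using kderiv_differentiable[OF assms that] by (simp add: linear_frechet_derivative)
  moreover have "multilinear k (\<lambda>vs. kderiv F (Suc k) x (v # vs))" for v
    using multilinear_frechet_derivative[of k "kderiv F k" x v] Suc kderiv_differentiable[OF assms]
    by simp
  ultimately show ?case by simp
qed

lemma linear_euclidean_expansion: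
  fixes T :: "'a::euclidean_space \<Rightarrow> 'b::real_vector"
  assumes "linear T"
  shows "T v = (\<Sum>b\<in>Basis. (v \<bullet> b) *\<^sub>R T b)"
proof -
  have "T v = T (\<Sum>b\<in>Basis. (v \<bullet> b) *\<^sub>R b)" by (simp add: euclidean_representation)
  also have "\<dots> = (\<Sum>b\<in>Basis. (v \<bullet> b) *\<^sub>R T b)"
    using assms by (simp add: linear_sum linear_scale)
  finally show ?thesis .
qed

lemma inner_sum_Basis_scaleR:
  fixes f :: "'a::euclidean_space \<Rightarrow> real"
  assumes "i \<in> Basis"
  shows "(\<Sum>b\<in>Basis. f b *\<^sub>R b) \<bullet> i = f i"
proof -
  have "(\<Sum>b\<in>Basis. f b *\<^sub>R b) \<bullet> i = (\<Sum>b\<in>Basis. (b \<bullet> i) * f b)"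
    by (simp add: inner_sum_left mult.commute)
  also have "\<dots> = f i"
    using assms by (rule sum_inner_Basis_eq)
  finally show ?thesis .
qed

lemma multilinear_bounded:
  fixes g :: "'a::euclidean_space list \<Rightarrow> 'b::real_normed_vector"
  assumes "multilinear k g"
  shows "\<exists>C. \<forall>vs. length vs = k \<longrightarrow> (\<forall>v\<in>set vs. norm v \<le> 1) \<longrightarrow> norm (g vs) \<le> C"
  using assms
proof (induction k arbitrary: g)
  case 0
  then show ?case by (intro exI[of _ "norm (g [])"]) auto
next
  case (Suc k)
  have "\<forall>b. \<exists>C. \<forall>vs. length vs = k \<longrightarrow> (\<forall>v\<in>set vs. norm v \<le> 1) \<longrightarrow> norm (g (b # vs)) \<le> C"
    using Suc by simp
  then obtain C where C: "\<And>b vs. length vs = k \<Longrightarrow> \<forall>v\<in>set vs. norm v \<le> 1 \<Longrightarrow> norm (g (b # vs)) \<le> C b"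
    by metis
  have "norm (g (v # vs)) \<le> (\<Sum>b\<in>Basis. \<bar>C b\<bar>)"
    if vs: "length vs = k" "\<forall>v\<in>set vs. norm v \<le> 1" and v: "norm v \<le> 1" for v vs
  proof -
    have "g (v # vs) = (\<Sum>b\<in>Basis. (v \<bullet> b) *\<^sub>R g (b # vs))"
      using Suc.prems vs by (intro linear_euclidean_expansion) simp
    then have "norm (g (v # vs)) \<le> (\<Sum>b\<in>Basis. \<bar>v \<bullet> b\<bar> * norm (g (b # vs)))"
      by (metis (no_types, lifting) norm_scaleR norm_sum sum.cong)
    also have "\<dots> \<le> (\<Sum>b\<in>Basis. 1 * \<bar>C b\<bar>)"
    proof (rule sum_mono, rule mult_mono)
      show "\<bar>v \<bullet> b\<bar> \<le> 1" if "b \<in> Basis" for b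
        using Basis_le_norm[OF that, of v] v by linarith
      show "norm (g (b # vs)) \<le> \<bar>C b\<bar>" for b
        using C[OF vs] by (meson abs_ge_self order_trans)
    qed auto
    finally show ?thesis by simp
  qed
  then show ?case
    by (intro exI[of _ "\<Sum>b\<in>Basis. \<bar>C b\<bar>"] allI impI) (auto simp: length_Suc_conv)
qed

lemma norm_kderiv_le_kderiv_norm:
  fixes x :: "'a::euclidean_space"
  assumes "smooth F" "length vs = k" "\<forall>v\<in>set vs. norm v \<le> 1"
  shows "norm (kderiv F k x vs) \<le> kderiv_norm F k x"
proof -
  obtain C where "\<And>vs. length vs = k \<Longrightarrow> \<forall>v\<in>set vs. norm v \<le> 1 \<Longrightarrow> norm (kderiv F k x vs) \<le> C"
    using multilinear_bounded[OF multilinear_kderiv[OF assms(1)], of k x] by blast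
  then have "bdd_above {norm (kderiv F k x vs) | vs. length vs = k \<and> (\<forall>v\<in>set vs. norm v \<le> 1)}"
    by (auto intro!: bdd_aboveI[of _ C])
  then show ?thesis
    unfolding kderiv_norm_def by (rule cSup_upper[rotated]) (use assms in auto)
qed

lemma Bseq_plus:
  fixes f g :: "nat \<Rightarrow> 'a::real_normed_vector"
  assumes "Bseq f" "Bseq g"
  shows "Bseq (\<lambda>n. f n + g n)"
proof -
  obtain K1 where K1: "\<forall>n. norm (f n) \<le> K1" using assms(1) by (auto elim: BseqE)
  obtain K2 where K2: "\<forall>n. norm (g n) \<le> K2" using assms(2) by (auto elim: BseqE)
  have "norm (f n + g n) \<le> K1 + K2" for n
    using norm_triangle_ineq[of "f n" "g n"] K1 K2 by (smt (verit))
  then show ?thesis by (rule BseqI')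
qed

lemma Bseq_mult_tendsto_zero:
  fixes f g :: "nat \<Rightarrow> real"
  assumes "Bseq f" "Bseq g" "f \<longlonglongrightarrow> 0 \<or> g \<longlonglongrightarrow> 0"
  shows "(\<lambda>n. f n * g n) \<longlonglongrightarrow> 0"
proof -
  obtain Kf where Kf: "\<forall>n. norm (f n) \<le> Kf" using assms(1) by (auto elim: BseqE)
  obtain Kg where Kg: "\<forall>n. norm (g n) \<le> Kg" using assms(2) by (auto elim: BseqE)
  from assms(3) show ?thesis
  proof
    assume "f \<longlonglongrightarrow> 0"
    then have "(\<lambda>n. \<bar>f n\<bar> * Kg) \<longlonglongrightarrow> 0"
      using tendsto_mult_left_zero tendsto_rabs_zero by blast
    then show ?thesis
      by (rule Lim_null_comparison[rotated])
         (use Kg in \<open>auto intro!: always_eventually mult_left_mono simp: abs_mult\<close>)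
  next
    assume "g \<longlonglongrightarrow> 0"
    then have "(\<lambda>n. Kf * \<bar>g n\<bar>) \<longlonglongrightarrow> 0"
      using tendsto_mult_right_zero tendsto_rabs_zero by blast
    then show ?thesis
      by (rule Lim_null_comparison[rotated])
         (use Kf in \<open>auto intro!: always_eventually mult_right_mono simp: abs_mult\<close>)
  qed
qed

lemma lipschitz_linear_growth:
  fixes F :: "'a::real_normed_vector \<Rightarrow> 'b::real_normed_vector"
  assumes "L-lipschitz_on UNIV F" "\<delta> > 0"
  shows "\<exists>K. \<forall>x. \<delta> \<le> norm x \<longrightarrow> norm (F x) \<le> K * norm x"
proof (intro exI allI impI)
  fix x :: 'a
  assume x: "\<delta> \<le> norm x"
  have "norm (F 0) = norm (F 0) / \<delta> * \<delta>"
    using assms(2) by simp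
  also have "\<dots> \<le> norm (F 0) / \<delta> * norm x"
    using x assms(2) by (intro mult_left_mono) auto
  finally have "norm (F 0) \<le> norm (F 0) / \<delta> * norm x" .
  moreover have "norm (F x) \<le> norm (F 0) + L * norm x"
    using lipschitz_on_normD[OF assms(1), of x 0] norm_triangle_ineq2[of "F x" "F 0"] by simp
  ultimately show "norm (F x) \<le> (L + norm (F 0) / \<delta>) * norm x"
    by (simp add: distrib_right)
qed

locale flat_along_sequence =
  fixes A :: "'a::euclidean_space \<Rightarrow> 'a" and F :: "'a \<Rightarrow> 'a" and y :: "nat \<Rightarrow> 'a"
    and d :: nat and \<delta> L :: real
  assumes linear_A: "linear A" and smooth_F: "smooth F"
    and lipschitz_F: "L-lipschitz_on UNIV F"
    and \<delta>_pos: "\<delta> > 0" and y_away: "\<And>n. \<delta> \<le> norm (y n)"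
    and flat: "\<And>k. k \<in> {1..<d} \<Longrightarrow>
      (\<lambda>n. norm (y n) ^ (k - 1) * kderiv_norm F k (y n)) \<longlonglongrightarrow> 0"
begin

abbreviation drift :: "'a \<Rightarrow> 'a" where
  "drift \<equiv> \<lambda>x. A x + F x"

text \<open>\<open>controlled m w s g\<close>: \<open>g\<close> is a polynomial in components of the drift and of
  \<open>D\<^sup>kF\<close>, \<open>1 \<le> k \<le> m\<close>, where the drift has weight 1 and \<open>D\<^sup>kF\<close> weight \<open>1 - k\<close>.
  Along \<open>y\<close> such a \<open>g\<close> is \<open>O(\<bar>y\<bar>\<^sup>w)\<close>, and even \<open>o(\<bar>y\<bar>\<^sup>w)\<close> if \<open>s\<close> holds.\<close>
inductive controlled :: "nat \<Rightarrow> int \<Rightarrow> bool \<Rightarrow> ('a \<Rightarrow> real) \<Rightarrow> bool" where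
  const: "controlled 0 0 False (\<lambda>x. c)"
| zero: "controlled 0 w True (\<lambda>x. 0)"
| drift_component: "controlled 0 1 False (\<lambda>x. drift x \<bullet> b)"
| kderiv_component: "1 \<le> k \<Longrightarrow> length bs = k \<Longrightarrow> \<forall>v\<in>set bs. norm v \<le> 1 \<Longrightarrow>
    controlled k (1 - int k) True (\<lambda>x. kderiv F k x bs \<bullet> b)"
| mult: "controlled m1 w1 s1 g1 \<Longrightarrow> controlled m2 w2 s2 g2 \<Longrightarrow>
    controlled (max m1 m2) (w1 + w2) (s1 \<or> s2) (\<lambda>x. g1 x * g2 x)"
| add: "controlled m w s g1 \<Longrightarrow> controlled m w s g2 \<Longrightarrow> controlled m w s (\<lambda>x. g1 x + g2 x)"
| weaken: "controlled m w s g \<Longrightarrow> m \<le> m' \<Longrightarrow> w \<le> w' \<Longrightarrow> (s' \<longrightarrow> s) \<Longrightarrow> controlled m' w' s' g"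

definition rescaled :: "('a \<Rightarrow> real) \<Rightarrow> int \<Rightarrow> nat \<Rightarrow> real" where
  "rescaled g w n = g (y n) / norm (y n) powr real_of_int w"

lemma norm_y_pos: "norm (y n) > 0"
  using y_away \<delta>_pos by (metis less_le_trans)

lemma differentiable_F: "F differentiable (at x)"
  using kderiv_differentiable[OF smooth_F, of "[]" 0] by simp

lemma drift_has_derivative:
  "(drift has_derivative (\<lambda>h. A h + frechet_derivative F (at x) h)) (at x)"
  by (intro has_derivative_add linear_imp_has_derivative linear_A)
     (use differentiable_F in \<open>simp add: frechet_derivative_works\<close>)

lemma Bseq_rescaled_drift_component: "Bseq (rescaled (\<lambda>x. drift x \<bullet> b) 1)"
proof -
  obtain KA where KA: "\<And>x. norm (A x) \<le> KA * norm x"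
    using linear_bounded[OF linear_A] by blast
  obtain KF where KF: "\<And>x. \<delta> \<le> norm x \<Longrightarrow> norm (F x) \<le> KF * norm x"
    using lipschitz_linear_growth[OF lipschitz_F \<delta>_pos] by blast
  have "norm (rescaled (\<lambda>x. drift x \<bullet> b) 1 n) \<le> (KA + KF) * norm b" for n
  proof -
    have "norm (drift (y n)) \<le> norm (A (y n)) + norm (F (y n))"
      by (rule norm_triangle_ineq)
    also have "\<dots> \<le> KA * norm (y n) + KF * norm (y n)"
      using KA[of "y n"] KF[OF y_away[of n]] by (rule add_mono)
    finally have "norm (drift (y n)) * norm b \<le> (KA * norm (y n) + KF * norm (y n)) * norm b"
      by (rule mult_right_mono) simp
    then have "\<bar>drift (y n) \<bullet> b\<bar> \<le> (KA + KF) * norm b * norm (y n)"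
      using Cauchy_Schwarz_ineq2[of "drift (y n)" b] by (simp only: ac_simps distrib_right)
    then show ?thesis
      using norm_y_pos[of n] by (simp add: rescaled_def pos_divide_le_eq)
  qed
  then show ?thesis by (rule BseqI')
qed

lemma rescaled_kderiv_component_tendsto_zero:
  assumes "k \<in> {1..<d}" "length bs = k" "\<forall>v\<in>set bs. norm v \<le> 1"
  shows "rescaled (\<lambda>x. kderiv F k x bs \<bullet> b) (1 - int k) \<longlonglongrightarrow> 0"
proof (rule Lim_null_comparison[OF always_eventually])
  show "\<forall>n. norm (rescaled (\<lambda>x. kderiv F k x bs \<bullet> b) (1 - int k) n)
      \<le> norm b * kderiv_norm F k (y n) * norm (y n) ^ (k - 1)"
  proof
    fix n
    let ?r = "norm (y n)"
    have "real_of_int (1 - int k) = - real (k - 1)"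
      using assms(1) by (simp add: of_nat_diff)
    then have "?r powr real_of_int (1 - int k) = inverse (?r ^ (k - 1))"
      using norm_y_pos[of n] by (simp only: powr_minus powr_realpow)
    then have "norm (rescaled (\<lambda>x. kderiv F k x bs \<bullet> b) (1 - int k) n)
        = \<bar>kderiv F k (y n) bs \<bullet> b\<bar> * ?r ^ (k - 1)"
      by (simp add: rescaled_def divide_inverse abs_mult)
    also have "\<dots> \<le> norm b * kderiv_norm F k (y n) * ?r ^ (k - 1)"
    proof (rule mult_right_mono)
      show "\<bar>kderiv F k (y n) bs \<bullet> b\<bar> \<le> norm b * kderiv_norm F k (y n)"
        using Cauchy_Schwarz_ineq2[of "kderiv F k (y n) bs" b]
          norm_kderiv_le_kderiv_norm[OF smooth_F assms(2,3), of "y n"]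
        by (metis mult.commute mult_right_mono norm_ge_zero order_trans)
    qed simp
    finally show "norm (rescaled (\<lambda>x. kderiv F k x bs \<bullet> b) (1 - int k) n)
        \<le> norm b * kderiv_norm F k (y n) * ?r ^ (k - 1)" .
  qed
  show "(\<lambda>n. norm b * kderiv_norm F k (y n) * norm (y n) ^ (k - 1)) \<longlonglongrightarrow> 0"
    using tendsto_mult_right_zero[OF flat[OF assms(1)], of "norm b"] by (simp add: mult_ac)
qed

lemma Bseq_norm_y_powr:
  assumes "w \<le> 0"
  shows "Bseq (\<lambda>n. norm (y n) powr w)"
proof (rule BseqI')
  fix n
  show "norm (norm (y n) powr w) \<le> \<delta> powr w"
    using powr_mono2'[OF assms \<delta>_pos y_away[of n]] by simp
qed

lemma rescaled_mult:
  "rescaled (\<lambda>x. g1 x * g2 x) (w1 + w2) = (\<lambda>n. rescaled g1 w1 n * rescaled g2 w2 n)"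
  unfolding rescaled_def by (rule ext) (simp add: powr_add)

lemma rescaled_add:
  "rescaled (\<lambda>x. g1 x + g2 x) w = (\<lambda>n. rescaled g1 w n + rescaled g2 w n)"
  unfolding rescaled_def by (rule ext) (simp add: add_divide_distrib)

lemma rescaled_change_weight:
  "rescaled g w' = (\<lambda>n. norm (y n) powr real_of_int (w - w') * rescaled g w n)"
  unfolding rescaled_def by (rule ext) (simp add: powr_diff norm_y_pos)

lemma controlled_rescaled:
  assumes "controlled m w s g" "m < d"
  shows "Bseq (rescaled g w) \<and> (s \<longrightarrow> rescaled g w \<longlonglongrightarrow> 0)"
  using assms
proof (induction rule: controlled.induct)
  case (const c)
  then show ?case using norm_y_pos by (simp add: rescaled_def)
next
  case (zero w)
  then show ?case by (simp add: rescaled_def)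
next
  case (drift_component b)
  then show ?case using Bseq_rescaled_drift_component by simp
next
  case (kderiv_component k bs b)
  then have "rescaled (\<lambda>x. kderiv F k x bs \<bullet> b) (1 - int k) \<longlonglongrightarrow> 0"
    by (intro rescaled_kderiv_component_tendsto_zero) auto
  then show ?case by (auto intro: convergent_imp_Bseq convergentI)
next
  case (mult m1 w1 s1 g1 m2 w2 s2 g2)
  then have B: "Bseq (rescaled g1 w1)" "Bseq (rescaled g2 w2)"
    and "s1 \<or> s2 \<longrightarrow> rescaled g1 w1 \<longlonglongrightarrow> 0 \<or> rescaled g2 w2 \<longlonglongrightarrow> 0"
    by auto
  then show ?case
    unfolding rescaled_mult using Bseq_mult[OF B] Bseq_mult_tendsto_zero[OF B] by blast
next
  case (add m w s g1 g2)
  then show ?case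
    unfolding rescaled_add by (auto intro: Bseq_plus tendsto_add_zero)
next
  case (weaken m w s g m' w' s')
  then have IH: "Bseq (rescaled g w)" "s \<longrightarrow> rescaled g w \<longlonglongrightarrow> 0"
    by simp_all
  have "Bseq (\<lambda>n. norm (y n) powr real_of_int (w - w'))"
    using \<open>w \<le> w'\<close> by (intro Bseq_norm_y_powr) simp
  note B = this IH(1)
  show ?case
    unfolding rescaled_change_weight[of g w' w]
    using Bseq_mult[OF B] Bseq_mult_tendsto_zero[OF B] IH(2) \<open>s' \<longrightarrow> s\<close> by blast
qed

lemma controlled_scale: "controlled m w s g \<Longrightarrow> controlled m w s (\<lambda>x. c * g x)"
  using mult[OF const[of c]] by simp

lemma controlled_diff:
  "controlled m w s g1 \<Longrightarrow> controlled m w s g2 \<Longrightarrow> controlled m w s (\<lambda>x. g1 x - g2 x)"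
  using add[of m w s g1 "\<lambda>x. (-1) * g2 x"] controlled_scale[of m w s g2 "-1"] by simp

lemma controlled_sum:
  "finite S \<Longrightarrow> (\<And>i. i \<in> S \<Longrightarrow> controlled m w s (g i)) \<Longrightarrow> controlled m w s (\<lambda>x. \<Sum>i\<in>S. g i x)"
proof (induction S rule: finite_induct)
  case empty
  show ?case using weaken[OF zero[of w], of m w s] by simp
next
  case (insert a S)
  then show ?case using add[of m w s "g a" "\<lambda>x. \<Sum>i\<in>S. g i x"] by simp
qed

lemma controlled_drift_component_derivative:
  "controlled 1 1 False (\<lambda>x. (A (drift x) + frechet_derivative F (at x) (drift x)) \<bullet> b)"
proof -
  have expand: "(A v + frechet_derivative F (at x) v) \<bullet> b
      = (\<Sum>b'\<in>Basis. (v \<bullet> b') * (A b' \<bullet> b + kderiv F 1 x [b'] \<bullet> b))" for x v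
    using Linear_Algebra.linear_componentwise[OF linear_A, of v b]
      Linear_Algebra.linear_componentwise[OF linear_frechet_derivative[OF differentiable_F[of x]], of v b]
    by (simp add: inner_add_left distrib_left sum.distrib)
  have "controlled 1 1 False (\<lambda>x. (drift x \<bullet> b') * (A b' \<bullet> b + kderiv F 1 x [b'] \<bullet> b))"
    if "b' \<in> Basis" for b'
  proof -
    have k1: "controlled 1 (1 - int 1) True (\<lambda>x. kderiv F 1 x [b'] \<bullet> b)"
      using that by (intro kderiv_component) auto
    have "controlled 1 0 False (\<lambda>x. A b' \<bullet> b + kderiv F 1 x [b'] \<bullet> b)"
    proof (rule add)
      show "controlled 1 0 False (\<lambda>x. A b' \<bullet> b)" by (rule weaken[OF const]) auto
      show "controlled 1 0 False (\<lambda>x. kderiv F 1 x [b'] \<bullet> b)" by (rule weaken[OF k1]) auto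
    qed
    then show ?thesis by (rule weaken[OF mult[OF drift_component]]) auto
  qed
  then have "controlled 1 1 False
      (\<lambda>x. \<Sum>b'\<in>Basis. (drift x \<bullet> b') * (A b' \<bullet> b + kderiv F 1 x [b'] \<bullet> b))"
    by (intro controlled_sum) auto
  then show ?thesis by (simp only: expand)
qed

lemma controlled_kderiv_component_derivative:
  assumes "1 \<le> k" "length bs = k" "\<forall>v\<in>set bs. norm v \<le> 1"
  shows "controlled (Suc k) (1 - int k) True
    (\<lambda>x. frechet_derivative (\<lambda>z. kderiv F k z bs) (at x) (drift x) \<bullet> b)"
proof -
  have expand: "frechet_derivative (\<lambda>z. kderiv F k z bs) (at x) v \<bullet> b
      = (\<Sum>b'\<in>Basis. (v \<bullet> b') * (kderiv F (Suc k) x (b' # bs) \<bullet> b))" for x v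
    using Linear_Algebra.linear_componentwise[OF linear_frechet_derivative[OF
        kderiv_differentiable[OF smooth_F assms(2), of x]], of v b]
    by simp
  have "controlled (Suc k) (1 - int k) True
      (\<lambda>x. (drift x \<bullet> b') * (kderiv F (Suc k) x (b' # bs) \<bullet> b))" if "b' \<in> Basis" for b'
  proof -
    have "controlled (Suc k) (1 - int (Suc k)) True (\<lambda>x. kderiv F (Suc k) x (b' # bs) \<bullet> b)"
      using assms that by (intro kderiv_component) auto
    then show ?thesis by (rule weaken[OF mult[OF drift_component]]) auto
  qed
  then have "controlled (Suc k) (1 - int k) True
      (\<lambda>x. \<Sum>b'\<in>Basis. (drift x \<bullet> b') * (kderiv F (Suc k) x (b' # bs) \<bullet> b))"
    by (intro controlled_sum) auto
  then show ?thesis by (simp only: expand)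
qed

lemma controlled_derivative:
  assumes "controlled m w s g"
  shows "\<exists>g'. (\<forall>x. (g has_derivative g' x) (at x)) \<and> controlled (Suc m) w s (\<lambda>x. g' x (drift x))"
  using assms
proof (induction rule: controlled.induct)
  case (const c)
  show ?case
    by (intro exI[of _ "\<lambda>x h. 0"] conjI allI has_derivative_const)
       (rule controlled.weaken[OF controlled.zero[of 0]], simp_all)
next
  case (zero w)
  show ?case
    by (intro exI[of _ "\<lambda>x h. 0"] conjI allI has_derivative_const)
       (rule controlled.weaken[OF controlled.zero[of w]], simp_all)
next
  case (drift_component b)
  have "((\<lambda>x. drift x \<bullet> b) has_derivative (\<lambda>h. (A h + frechet_derivative F (at x) h) \<bullet> b)) (at x)" for x
    by (intro has_derivative_inner_left drift_has_derivative)
  then show ?case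
    using controlled_drift_component_derivative[of b]
    by (intro exI[of _ "\<lambda>x h. (A h + frechet_derivative F (at x) h) \<bullet> b"]) simp
next
  case (kderiv_component k bs b)
  have "((\<lambda>x. kderiv F k x bs \<bullet> b) has_derivative
      (\<lambda>h. frechet_derivative (\<lambda>z. kderiv F k z bs) (at x) h \<bullet> b)) (at x)" for x
    using kderiv_differentiable[OF smooth_F kderiv_component(2)]
    by (intro has_derivative_inner_left) (simp add: frechet_derivative_works)
  then show ?case
    using controlled_kderiv_component_derivative[OF kderiv_component, of b]
    by (intro exI[of _ "\<lambda>x h. frechet_derivative (\<lambda>z. kderiv F k z bs) (at x) h \<bullet> b"]) simp
next
  case (mult m1 w1 s1 g1 m2 w2 s2 g2)
  obtain d1 where d1: "\<And>x. (g1 has_derivative d1 x) (at x)" "controlled (Suc m1) w1 s1 (\<lambda>x. d1 x (drift x))"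
    using mult by blast
  obtain d2 where d2: "\<And>x. (g2 has_derivative d2 x) (at x)" "controlled (Suc m2) w2 s2 (\<lambda>x. d2 x (drift x))"
    using mult by blast
  have "((\<lambda>x. g1 x * g2 x) has_derivative (\<lambda>h. g1 x * d2 x h + d1 x h * g2 x)) (at x)" for x
    using d1(1) d2(1) by (rule has_derivative_mult)
  moreover have "controlled (Suc (max m1 m2)) (w1 + w2) (s1 \<or> s2)
      (\<lambda>x. g1 x * d2 x (drift x) + d1 x (drift x) * g2 x)"
  proof (rule controlled.add)
    show "controlled (Suc (max m1 m2)) (w1 + w2) (s1 \<or> s2) (\<lambda>x. g1 x * d2 x (drift x))"
      by (rule controlled.weaken[OF controlled.mult[OF mult.hyps(1) d2(2)]]) auto
    show "controlled (Suc (max m1 m2)) (w1 + w2) (s1 \<or> s2) (\<lambda>x. d1 x (drift x) * g2 x)"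
      by (rule controlled.weaken[OF controlled.mult[OF d1(2) mult.hyps(2)]]) auto
  qed
  ultimately show ?case
    by (intro exI[of _ "\<lambda>x h. g1 x * d2 x h + d1 x h * g2 x"]) simp
next
  case (add m w s g1 g2)
  obtain d1 where d1: "\<And>x. (g1 has_derivative d1 x) (at x)" "controlled (Suc m) w s (\<lambda>x. d1 x (drift x))"
    using add by blast
  obtain d2 where d2: "\<And>x. (g2 has_derivative d2 x) (at x)" "controlled (Suc m) w s (\<lambda>x. d2 x (drift x))"
    using add by blast
  have "((\<lambda>x. g1 x + g2 x) has_derivative (\<lambda>h. d1 x h + d2 x h)) (at x)" for x
    using d1(1) d2(1) by (rule has_derivative_add)
  with controlled.add[OF d1(2) d2(2)] show ?case
    by (intro exI[of _ "\<lambda>x h. d1 x h + d2 x h"]) simp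
next
  case (weaken m w s g m' w' s')
  then obtain g' where "\<forall>x. (g has_derivative g' x) (at x)" "controlled (Suc m) w s (\<lambda>x. g' x (drift x))"
    by blast
  moreover have "controlled (Suc m') w' s' (\<lambda>x. g' x (drift x))"
    using weaken.hyps(2-4) by (intro controlled.weaken[OF calculation(2)]) auto
  ultimately show ?case by blast
qed

definition controlled_field :: "nat \<Rightarrow> ('a \<Rightarrow> 'a) \<Rightarrow> bool" where
  "controlled_field m R \<longleftrightarrow> (\<forall>b\<in>Basis. controlled m 0 True (\<lambda>x. R x \<bullet> b))"

lemma controlled_field_derivative:
  assumes "controlled_field m R"
  shows "\<exists>R'. (\<forall>x. (R has_derivative R' x) (at x)) \<and> controlled_field (Suc m) (\<lambda>x. R' x (drift x))"
proof -
  have "\<forall>b\<in>Basis. \<exists>g'. (\<forall>x. ((\<lambda>x. R x \<bullet> b) has_derivative g' x) (at x))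
      \<and> controlled (Suc m) 0 True (\<lambda>x. g' x (drift x))"
    using assms controlled_derivative unfolding controlled_field_def by blast
  then obtain G where G: "\<forall>b\<in>Basis. (\<forall>x. ((\<lambda>x. R x \<bullet> b) has_derivative G b x) (at x))
      \<and> controlled (Suc m) 0 True (\<lambda>x. G b x (drift x))"
    by (rule bchoice[elim_format]) blast
  define R' where "R' x h = (\<Sum>b\<in>Basis. G b x h *\<^sub>R b)" for x h
  have R'_component: "R' x h \<bullet> i = G i x h" if "i \<in> Basis" for x h i
    unfolding R'_def using inner_sum_Basis_scaleR[OF that, of "\<lambda>b. G b x h"] .
  have "(R has_derivative R' x) (at x)" for x
  proof (rule has_derivative_componentwise_within[THEN iffD2], rule ballI)
    fix i :: 'a
    assume i: "i \<in> Basis"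
    have "(\<lambda>h. R' x h \<bullet> i) = G i x"
      by (rule ext) (rule R'_component[OF i])
    then show "((\<lambda>x. R x \<bullet> i) has_derivative (\<lambda>h. R' x h \<bullet> i)) (at x)"
      using conjunct1[OF bspec[OF G i], rule_format, of x] by (simp only:)
  qed
  moreover have "controlled_field (Suc m) (\<lambda>x. R' x (drift x))"
    unfolding controlled_field_def
  proof
    fix i :: 'a
    assume i: "i \<in> Basis"
    have "(\<lambda>x. R' x (drift x) \<bullet> i) = (\<lambda>x. G i x (drift x))"
      by (rule ext) (rule R'_component[OF i])
    then show "controlled (Suc m) 0 True (\<lambda>x. R' x (drift x) \<bullet> i)"
      using conjunct2[OF bspec[OF G i]] by (simp only:)
  qed
  ultimately show ?thesis by blast
qed

lemma controlled_field_linear_part: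
  assumes "controlled_field j R"
  shows "controlled_field (Suc j) (\<lambda>x. A (R x) + frechet_derivative F (at x) (c + R x))"
  unfolding controlled_field_def
proof
  fix b0 :: 'a
  assume "b0 \<in> Basis"
  have expand: "(A (R x) + frechet_derivative F (at x) (c + R x)) \<bullet> b0
      = (\<Sum>b\<in>Basis. (R x \<bullet> b) * (A b \<bullet> b0))
        + (\<Sum>b\<in>Basis. (c \<bullet> b + R x \<bullet> b) * (kderiv F 1 x [b] \<bullet> b0))" for x
    using Linear_Algebra.linear_componentwise[OF linear_A, of "R x" b0]
      Linear_Algebra.linear_componentwise[OF linear_frechet_derivative[OF differentiable_F[of x]], of "c + R x" b0]
    by (simp add: inner_add_left)
  have "controlled (Suc j) 0 True (\<lambda>x. (R x \<bullet> b) * (A b \<bullet> b0))" if "b \<in> Basis" for b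
    using mult[OF assms[unfolded controlled_field_def, rule_format, OF that] const[of "A b \<bullet> b0"]]
    by (rule weaken) auto
  then have "controlled (Suc j) 0 True (\<lambda>x. \<Sum>b\<in>Basis. (R x \<bullet> b) * (A b \<bullet> b0))"
    by (intro controlled_sum) auto
  moreover have "controlled (Suc j) 0 True (\<lambda>x. (c \<bullet> b + R x \<bullet> b) * (kderiv F 1 x [b] \<bullet> b0))"
    if "b \<in> Basis" for b
  proof -
    have "controlled j 0 False (\<lambda>x. c \<bullet> b + R x \<bullet> b)"
    proof (rule add)
      show "controlled j 0 False (\<lambda>x. c \<bullet> b)" by (rule weaken[OF const]) auto
      have "controlled j 0 True (\<lambda>x. R x \<bullet> b)"
        using assms that unfolding controlled_field_def by blast
      then show "controlled j 0 False (\<lambda>x. R x \<bullet> b)" by (rule weaken) auto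
    qed
    moreover have "controlled 1 (1 - int 1) True (\<lambda>x. kderiv F 1 x [b] \<bullet> b0)"
      using that by (intro kderiv_component) auto
    ultimately show ?thesis by (rule weaken[OF mult]) auto
  qed
  then have "controlled (Suc j) 0 True
      (\<lambda>x. \<Sum>b\<in>Basis. (c \<bullet> b + R x \<bullet> b) * (kderiv F 1 x [b] \<bullet> b0))"
    by (intro controlled_sum) auto
  ultimately show "controlled (Suc j) 0 True
      (\<lambda>x. (A (R x) + frechet_derivative F (at x) (c + R x)) \<bullet> b0)"
    unfolding expand by (rule add)
qed

lemma controlled_field_diff:
  "controlled_field m R1 \<Longrightarrow> controlled_field m R2 \<Longrightarrow> controlled_field m (\<lambda>x. R1 x - R2 x)"
  by (simp add: controlled_field_def inner_diff_left controlled_diff)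

lemma lie_drift_const_plus_controlled:
  assumes "controlled_field j R"
  shows "\<exists>R'. controlled_field (Suc j) R' \<and> lie drift (\<lambda>x. c + R x) = (\<lambda>x. - A c + R' x)"
proof -
  obtain G where G: "\<And>x. (R has_derivative G x) (at x)"
    "controlled_field (Suc j) (\<lambda>x. G x (drift x))"
    using controlled_field_derivative[OF assms] by blast
  define R' where "R' x = G x (drift x) - (A (R x) + frechet_derivative F (at x) (c + R x))" for x
  have "frechet_derivative (\<lambda>x. c + R x) (at x) = G x" for x
    using has_derivative_add[OF has_derivative_const G(1), of c x]
    by (simp add: frechet_derivative_at[symmetric])
  then have "lie drift (\<lambda>x. c + R x) = (\<lambda>x. - A c + R' x)"
    by (simp add: lie_def R'_def fun_eq_iff frechet_derivative_at[OF drift_has_derivative, symmetric]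
        linear_add[OF linear_A])
  moreover have "controlled_field (Suc j) R'"
    unfolding R'_def using G(2) controlled_field_linear_part[OF assms]
    by (rule controlled_field_diff)
  ultimately show ?thesis by blast
qed

lemma iterated_lie_drift:
  "\<exists>R. controlled_field j R \<and> (lie drift ^^ j) (\<lambda>x. c) = (\<lambda>x. ((\<lambda>v. - A v) ^^ j) c + R x)"
proof (induction j)
  case 0
  have "controlled_field 0 (\<lambda>x. 0)"
    using zero[of 0] by (simp add: controlled_field_def)
  then show ?case by (intro exI[of _ "\<lambda>x. 0"]) simp
next
  case (Suc j)
  then obtain R where "controlled_field j R"
    and R: "(lie drift ^^ j) (\<lambda>x. c) = (\<lambda>x. ((\<lambda>v. - A v) ^^ j) c + R x)"
    by blast
  then obtain R' where "controlled_field (Suc j) R'"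
    "lie drift (\<lambda>x. ((\<lambda>v. - A v) ^^ j) c + R x) = (\<lambda>x. - A (((\<lambda>v. - A v) ^^ j) c) + R' x)"
    using lie_drift_const_plus_controlled by blast
  then show ?case using R by (intro exI[of _ R']) simp
qed

lemma controlled_field_tendsto_zero:
  assumes "controlled_field j R" "j < d"
  shows "(\<lambda>n. R (y n)) \<longlonglongrightarrow> 0"
proof (rule tendsto_componentwise_iff[THEN iffD2], rule ballI)
  fix b :: 'a
  assume "b \<in> Basis"
  with assms(1) have "controlled j 0 True (\<lambda>x. R x \<bullet> b)"
    unfolding controlled_field_def by (rule bspec)
  then have "rescaled (\<lambda>x. R x \<bullet> b) 0 \<longlonglongrightarrow> 0"
    using controlled_rescaled assms(2) by simp
  moreover have "rescaled (\<lambda>x. R x \<bullet> b) 0 = (\<lambda>n. R (y n) \<bullet> b)"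
    using norm_y_pos by (intro ext) (simp add: rescaled_def)
  ultimately show "(\<lambda>n. R (y n) \<bullet> b) \<longlonglongrightarrow> 0 \<bullet> b"
    by simp
qed

lemma iterated_lie_drift_tendsto:
  assumes "j < d"
  shows "(\<lambda>n. (lie drift ^^ j) (\<lambda>x. c) (y n)) \<longlonglongrightarrow> ((\<lambda>v. - A v) ^^ j) c"
proof -
  obtain R where R: "controlled_field j R"
    "(lie drift ^^ j) (\<lambda>x. c) = (\<lambda>x. ((\<lambda>v. - A v) ^^ j) c + R x)"
    using iterated_lie_drift by blast
  have "(\<lambda>n. ((\<lambda>v. - A v) ^^ j) c + R (y n)) \<longlonglongrightarrow> ((\<lambda>v. - A v) ^^ j) c + 0"
    by (intro tendsto_add tendsto_const controlled_field_tendsto_zero[OF R(1) assms])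
  then show ?thesis using R(2) by simp
qed

end

lemma funpow_uminus_linear:
  fixes A :: "'a::real_vector \<Rightarrow> 'a"
  assumes "linear A"
  shows "((\<lambda>v. - A v) ^^ j) c = (-1) ^ j *\<^sub>R (A ^^ j) c"
  by (induction j) (simp_all add: linear_scale[OF assms])

lemma funpow_lie_in_brackets:
  assumes "W \<in> S" "V \<in> S"
  shows "(lie V ^^ Suc j) W \<in> brackets S"
  by (induction j) (simp_all add: assms brackets.base brackets.step)

lemma kalman_dstar_span:
  assumes "kalman A B"
  shows "span {(A ^^ j) (B e) | j e. j < dstar A B \<and> e \<in> Basis} = UNIV"
proof -
  let ?G = "{(A ^^ j) (B e) | j e. e \<in> Basis}"
  obtain S where S: "S \<subseteq> ?G" "independent S" "?G \<subseteq> span S"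
    using maximal_independent_subset by blast
  have "finite S" using independent_bound[OF S(2)] by blast
  have "\<forall>s\<in>S. \<exists>j e. s = (A ^^ j) (B e) \<and> e \<in> Basis"
    using S(1) by blast
  then obtain J where J: "\<forall>s\<in>S. \<exists>e. s = (A ^^ J s) (B e) \<and> e \<in> Basis"
    by (rule bchoice[elim_format]) blast
  define m where "m = Suc (Max (insert 0 (J ` S)))"
  have "S \<subseteq> {(A ^^ j) (B e) | j e. j < m \<and> e \<in> Basis}"
  proof
    fix s assume s: "s \<in> S"
    moreover have "J s < m" unfolding m_def using \<open>finite S\<close> s by (simp add: le_imp_less_Suc)
    ultimately show "s \<in> {(A ^^ j) (B e) | j e. j < m \<and> e \<in> Basis}" using J by blast
  qed
  then have "span S \<subseteq> span {(A ^^ j) (B e) | j e. j < m \<and> e \<in> Basis}"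
    by (rule span_mono)
  moreover have "span ?G \<subseteq> span S"
    using S(3) by (simp add: span_minimal)
  moreover have "span ?G = UNIV"
    using assms unfolding kalman_def .
  ultimately have "span {(A ^^ j) (B e) | j e. j < m \<and> e \<in> Basis} = UNIV"
    by blast
  then have "\<exists>m. 0 < m \<and> span {(A ^^ j) (B e) | j e. j < m \<and> e \<in> Basis} = UNIV"
    unfolding m_def by blast
  from LeastI_ex[OF this] show ?thesis
    unfolding dstar_def by blast
qed

lemma span_funpow_uminus_kalman:
  assumes "linear A" "kalman A B"
  shows "span ((\<lambda>(e, j). ((\<lambda>v. - A v) ^^ j) (B e)) ` (Basis \<times> {..<dstar A B})) = UNIV"
proof -
  let ?X = "(\<lambda>(e, j). ((\<lambda>v. - A v) ^^ j) (B e)) ` (Basis \<times> {..<dstar A B})"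
  have "{(A ^^ j) (B e) | j e. j < dstar A B \<and> e \<in> Basis} \<subseteq> span ?X"
  proof clarify
    fix j and e :: 'b
    assume "j < dstar A B" "e \<in> Basis"
    then have "((\<lambda>v. - A v) ^^ j) (B e) \<in> span ?X" by (intro span_base) force
    then have "(-1) ^ j *\<^sub>R ((\<lambda>v. - A v) ^^ j) (B e) \<in> span ?X" by (rule span_scale)
    then show "(A ^^ j) (B e) \<in> span ?X" by (simp add: funpow_uminus_linear[OF assms(1)])
  qed
  then have "span {(A ^^ j) (B e) | j e. j < dstar A B \<and> e \<in> Basis} \<subseteq> span ?X"
    by (simp add: span_minimal)
  then show ?thesis
    using kalman_dstar_span[OF assms(2)] by auto
qed

lemma unit_orthogonal_if_span_ne_UNIV:
  fixes S :: "'a::euclidean_space set"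
  assumes "span S \<noteq> UNIV"
  shows "\<exists>u. norm u = 1 \<and> (\<forall>v\<in>S. u \<bullet> v = 0)"
proof -
  have "dim S < DIM('a)"
    using assms dim_eq_full[of S] dim_subset_UNIV[of S] by auto
  then obtain x where x: "x \<noteq> 0" "\<And>v. v \<in> span S \<Longrightarrow> orthogonal x v"
    using orthogonal_to_subspace_exists by blast
  then show ?thesis
    by (intro exI[of _ "x /\<^sub>R norm x"]) (auto simp: orthogonal_def span_base)
qed

lemma span_UNIV_near_limits:
  fixes f :: "'i \<Rightarrow> nat \<Rightarrow> 'a::euclidean_space"
  assumes lim: "\<And>i. i \<in> I \<Longrightarrow> f i \<longlonglongrightarrow> c i" and span: "span (c ` I) = UNIV"
  shows "\<exists>n. span ((\<lambda>i. f i n) ` I) = UNIV"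
proof (rule ccontr)
  assume "\<nexists>n. span ((\<lambda>i. f i n) ` I) = UNIV"
  then have "\<forall>n. \<exists>u. norm u = 1 \<and> (\<forall>i\<in>I. u \<bullet> f i n = 0)"
    using unit_orthogonal_if_span_ne_UNIV by fastforce
  then obtain U where U: "\<And>n. norm (U n) = 1" "\<And>n i. i \<in> I \<Longrightarrow> U n \<bullet> f i n = 0"
    by metis
  then have "\<forall>n. U n \<in> sphere 0 1" by simp
  then obtain l r where l: "l \<in> sphere 0 1" and r: "strict_mono r" "(U \<circ> r) \<longlonglongrightarrow> l"
    using compact_imp_seq_compact[OF compact_sphere] by (metis seq_compactE)
  have "l \<bullet> c i = 0" if "i \<in> I" for i
  proof -
    have "(\<lambda>n. U (r n) \<bullet> f i (r n)) \<longlonglongrightarrow> l \<bullet> c i"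
      using r LIMSEQ_subseq_LIMSEQ[OF lim[OF that] r(1)] by (intro tendsto_inner) (simp_all add: o_def)
    moreover have "(\<lambda>n. U (r n) \<bullet> f i (r n)) = (\<lambda>n. 0)"
      using U(2)[OF that] by simp
    ultimately show ?thesis using LIMSEQ_unique[OF tendsto_const] by metis
  qed
  then have "orthogonal l l"
    using span by (intro orthogonal_to_span[of l "c ` I"]) (auto simp: orthogonal_def)
  then show False using l by (simp add: orthogonal_def)
qed

theorem mainTheorem12:
  fixes A :: "'a::euclidean_space \<Rightarrow> 'a" and B :: "'b::euclidean_space \<Rightarrow> 'a"
    and F :: "'a \<Rightarrow> 'a" and y :: "nat \<Rightarrow> 'a"
  assumes "linear A" and "linear B" and "DIM('b) \<le> DIM('a)"
    and "kalman A B"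
    and "smooth F" and "\<exists>L. L-lipschitz_on UNIV F"
    and "\<exists>\<delta>>0. \<forall>n. \<delta> \<le> norm (y n)"
    and "\<forall>k\<in>{1..<dstar A B}. (\<lambda>n. norm (y n) ^ (k - 1) * kderiv_norm F k (y n)) \<longlonglongrightarrow> 0"
  shows "\<exists>x0. hoermander A B F x0"
proof -
  obtain L \<delta> where "L-lipschitz_on UNIV F" "\<delta> > 0" "\<forall>n. \<delta> \<le> norm (y n)"
    using assms(6,7) by blast
  then interpret flat_along_sequence A F y "dstar A B" \<delta> L
    using assms by (intro flat_along_sequence.intro) auto
  let ?I = "Basis \<times> {..<dstar A B}"
  let ?W = "\<lambda>(e, j). (lie drift ^^ j) (\<lambda>x. B e)"
  obtain n where n: "span ((\<lambda>i. ?W i (y n)) ` ?I) = UNIV"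
    using span_UNIV_near_limits[of ?I "\<lambda>i n. ?W i (y n)"] iterated_lie_drift_tendsto
      span_funpow_uminus_kalman[OF assms(1,4)] by fastforce
  let ?S = "Bfields B \<union> {drift}"
  have "?W (e, j) \<in> Bfields B \<union> brackets ?S" if "e \<in> Basis" for e j
    using that funpow_lie_in_brackets[of "\<lambda>x. B e" ?S drift]
    by (cases j) (auto simp: Bfields_def)
  then have "(\<lambda>i. ?W i (y n)) ` ?I \<subseteq> (\<lambda>V. V (y n)) ` (Bfields B \<union> brackets ?S)"
    by auto
  then have "span ((\<lambda>i. ?W i (y n)) ` ?I) \<subseteq> span ((\<lambda>V. V (y n)) ` (Bfields B \<union> brackets ?S))"
    by (rule span_mono)
  then show ?thesis
    using n unfolding hoermander_def by auto
qed

end
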